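(* Let $b_{ij},c_{ij}\in\mathbb{R}$ ($i,j\in\{0,1\}$) with $D:=b_{10}-c_{10}-b_{00}+c_{00}\neq0$, and let $$\gamma=\frac{b_{00}-c_{00}-b_{01}+c_{01}}{D},\qquad \delta=\frac{b_{10}-c_{10}+b_{01}-c_{01}-b_{11}+c_{11}-b_{00}+c_{00}}{D}.$$ For an instance $x$ with $P_{11},P_{10}\in[0,1]$ and $t(x)=P_{11}-P_{10}$, define the expected causal profit $$E[\dot P\mid x]=\big[P_{11}(b_{11}-c_{11})+(1-P_{11})(b_{01}-c_{01})\big]-\big[P_{10}(b_{10}-c_{10})+(1-P_{10})(b_{00}-c_{00})\big]$$ and the displacement $d(x)=\dfrac{t(x)-\delta P_{11}-\gamma}{\sqrt{\delta^2+1}}$ from the line $t=\gamma+\delta P_{11}$. Then $E[\dot P\mid x]$ is proportional to $d(x)$, with a proportionality constant depending only on the cost and benefit parameters (not on $x$).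
   Context: $P_{1w}=P(Y=1\mid x,W=w)$ is the positive outcome probability of instance $x$ under treatment $w$; $b_{ij}$ is the benefit of outcome $i$ under treatment $j$ and $c_{ij}$ the cost of outcome $i$ under treatment $j$. The line $t=\gamma+\delta P_{11}$ is the cost-sensitive causal classification decision boundary. *)

theory Defs
  imports Complex_Main
begin

text \<open>Benefits and costs are given as functions b c :: nat => nat => real,
  where b i j is the benefit of outcome i under treatment j (i, j in {0,1}).\<close>

definition denomD :: "(nat \<Rightarrow> nat \<Rightarrow> real) \<Rightarrow> (nat \<Rightarrow> nat \<Rightarrow> real) \<Rightarrow> real" where
  "denomD b c = b 1 0 - c 1 0 - b 0 0 + c 0 0"

definition gamma_cs :: "(nat \<Rightarrow> nat \<Rightarrow> real) \<Rightarrow> (nat \<Rightarrow> nat \<Rightarrow> real) \<Rightarrow> real" where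
  "gamma_cs b c = (b 0 0 - c 0 0 - b 0 1 + c 0 1) / denomD b c"

definition delta_cs :: "(nat \<Rightarrow> nat \<Rightarrow> real) \<Rightarrow> (nat \<Rightarrow> nat \<Rightarrow> real) \<Rightarrow> real" where
  "delta_cs b c = (b 1 0 - c 1 0 + b 0 1 - c 0 1 - b 1 1 + c 1 1 - b 0 0 + c 0 0) / denomD b c"

text \<open>Expected causal profit of an instance with P11 = P(Y=1|x,W=1), P10 = P(Y=1|x,W=0).\<close>
definition expected_profit ::
  "(nat \<Rightarrow> nat \<Rightarrow> real) \<Rightarrow> (nat \<Rightarrow> nat \<Rightarrow> real) \<Rightarrow> real \<Rightarrow> real \<Rightarrow> real" where
  "expected_profit b c P11 P10 =
     (P11 * (b 1 1 - c 1 1) + (1 - P11) * (b 0 1 - c 0 1))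
   - (P10 * (b 1 0 - c 1 0) + (1 - P10) * (b 0 0 - c 0 0))"

definition displacement ::
  "(nat \<Rightarrow> nat \<Rightarrow> real) \<Rightarrow> (nat \<Rightarrow> nat \<Rightarrow> real) \<Rightarrow> real \<Rightarrow> real \<Rightarrow> real" where
  "displacement b c P11 P10 =
     ((P11 - P10) - delta_cs b c * P11 - gamma_cs b c) / sqrt ((delta_cs b c)\<^sup>2 + 1)"

end

theory Submission
  imports Defs
begin

text \<open>The expected causal profit is affine in \<open>(P11, P10)\<close>, and the coefficient of \<open>-P10\<close>
  is exactly \<open>D\<close>. Factoring out \<open>D\<close> rewrites it as \<open>D (t - \<delta> P11 - \<gamma>)\<close>, and the
  displacement is this same affine form divided by \<open>sqrt (\<delta>\<^sup>2 + 1)\<close>; so the constant is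
  \<open>D sqrt (\<delta>\<^sup>2 + 1)\<close>. The identity holds for all real \<open>P11, P10\<close>, not only for probabilities.\<close>

lemma expected_profit_eq_denomD_mult:
  assumes "denomD b c \<noteq> 0"
  shows "expected_profit b c P11 P10
           = denomD b c * ((P11 - P10) - delta_cs b c * P11 - gamma_cs b c)"
  using assms unfolding delta_cs_def gamma_cs_def expected_profit_def
  by (simp add: field_simps) (simp add: denomD_def algebra_simps)

lemma sqrt_mult_displacement:
  "sqrt ((delta_cs b c)\<^sup>2 + 1) * displacement b c P11 P10
     = (P11 - P10) - delta_cs b c * P11 - gamma_cs b c"
proof -
  have "sqrt ((delta_cs b c)\<^sup>2 + 1) > 0"
    by (simp add: add_nonneg_pos)
  then show ?thesis
    unfolding displacement_def by simp
qed

theorem proposition3: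
  fixes b c :: "nat \<Rightarrow> nat \<Rightarrow> real"
  assumes "denomD b c \<noteq> 0"
  shows "\<exists>k::real. k \<noteq> 0 \<and>
           (\<forall>P11 P10. P11 \<in> {0..1} \<longrightarrow> P10 \<in> {0..1} \<longrightarrow>
              expected_profit b c P11 P10 = k * displacement b c P11 P10)"
proof (intro exI conjI allI impI)
  let ?k = "denomD b c * sqrt ((delta_cs b c)\<^sup>2 + 1)"
  have "(delta_cs b c)\<^sup>2 + 1 > 0"
    by (simp add: add_nonneg_pos)
  then show "?k \<noteq> 0"
    using assms by simp
  fix P11 P10 :: real
  show "expected_profit b c P11 P10 = ?k * displacement b c P11 P10"
    using expected_profit_eq_denomD_mult[OF assms] sqrt_mult_displacement
    by (simp add: mult.assoc)
qed

end
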